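(* Let $d \geq 2$ and $n_1,\dots,n_d \geq 1$ be integers, and let $G_1$ and $G_2$ be graphs with non-empty vertex sets and maximum degrees $\Delta_1$ and $\Delta_2$ respectively. Then $K_{n_1,\dots,n_d}$ is isomorphic to a subgraph of $G_1 \square G_2$ if and only if at least one of the following holds: (i) $K_{n_1,\dots,n_d}$ is isomorphic to a subgraph of $G_1$ or of $G_2$; (ii) $d=2$, $(n_1,n_2)=(2,2)$, and both $G_1$ and $G_2$ contain at least one edge; (iii) $d=2$, $\{n_1,n_2\}=\{1,s\}$ for some integer $s\geq 1$, and $\Delta_1+\Delta_2 \geq s$.
   Context: The cartesian product $G_1 \square G_2$ has vertex set $V(G_1)\times V(G_2)$, with $(a,v)(b,u)$ an edge iff either $ab\in E(G_1)$ and $u=v$, or $uv\in E(G_2)$ and $a=b$. $K_{n_1,\dots,n_d}$ denotes the complete $d$-partite graph with parts of sizes $n_1,\dots,n_d$. *)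

theory Defs
  imports Main
begin

definition graph :: "'a set \<Rightarrow> ('a \<Rightarrow> 'a \<Rightarrow> bool) \<Rightarrow> bool" where
  "graph V E \<longleftrightarrow> finite V \<and> (\<forall>x y. E x y \<longrightarrow> x \<in> V \<and> y \<in> V)
     \<and> (\<forall>x y. E x y \<longrightarrow> E y x) \<and> (\<forall>x. \<not> E x x)"

definition degree :: "'a set \<Rightarrow> ('a \<Rightarrow> 'a \<Rightarrow> bool) \<Rightarrow> 'a \<Rightarrow> nat" where
  "degree V E v = card {u \<in> V. E v u}"

definition max_degree :: "'a set \<Rightarrow> ('a \<Rightarrow> 'a \<Rightarrow> bool) \<Rightarrow> nat" where
  "max_degree V E = Max (degree V E ` V)"

definition has_edge :: "'a set \<Rightarrow> ('a \<Rightarrow> 'a \<Rightarrow> bool) \<Rightarrow> bool" where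
  "has_edge V E \<longleftrightarrow> (\<exists>x\<in>V. \<exists>y\<in>V. E x y)"

definition subgraph_iso ::
  "'a set \<Rightarrow> ('a \<Rightarrow> 'a \<Rightarrow> bool) \<Rightarrow> 'b set \<Rightarrow> ('b \<Rightarrow> 'b \<Rightarrow> bool) \<Rightarrow> bool" where
  "subgraph_iso VH EH VG EG \<longleftrightarrow> (\<exists>f. inj_on f VH \<and> f ` VH \<subseteq> VG \<and>
     (\<forall>x\<in>VH. \<forall>y\<in>VH. EH x y \<longrightarrow> EG (f x) (f y)))"

definition cart_V :: "'a set \<Rightarrow> 'b set \<Rightarrow> ('a \<times> 'b) set" where
  "cart_V V1 V2 = V1 \<times> V2"

definition cart_E :: "'a set \<Rightarrow> ('a \<Rightarrow> 'a \<Rightarrow> bool) \<Rightarrow> 'b set \<Rightarrow> ('b \<Rightarrow> 'b \<Rightarrow> bool)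
    \<Rightarrow> ('a \<times> 'b) \<Rightarrow> ('a \<times> 'b) \<Rightarrow> bool" where
  "cart_E V1 E1 V2 E2 p q \<longleftrightarrow> p \<in> V1 \<times> V2 \<and> q \<in> V1 \<times> V2 \<and>
     ((E1 (fst p) (fst q) \<and> snd p = snd q) \<or> (E2 (snd p) (snd q) \<and> fst p = fst q))"

text \<open>Complete d-partite graph K_{n 0, ..., n (d-1)}: vertex (i,j) is the j-th vertex of part i.\<close>
definition Kmp_V :: "nat \<Rightarrow> (nat \<Rightarrow> nat) \<Rightarrow> (nat \<times> nat) set" where
  "Kmp_V d n = {(i, j). i < d \<and> j < n i}"

definition Kmp_E :: "nat \<Rightarrow> (nat \<Rightarrow> nat) \<Rightarrow> (nat \<times> nat) \<Rightarrow> (nat \<times> nat) \<Rightarrow> bool" where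
  "Kmp_E d n p q \<longleftrightarrow> p \<in> Kmp_V d n \<and> q \<in> Kmp_V d n \<and> fst p \<noteq> fst q"

end

theory Submission
  imports Defs
begin

text \<open>Every edge of the product changes exactly one coordinate, so the product is covered
  by layers: copies \<open>G\<^sub>1 \<times> {v}\<close> of \<open>G\<^sub>1\<close> and \<open>{u} \<times> G\<^sub>2\<close> of \<open>G\<^sub>2\<close>. Two distinct vertices of a
  layer have all their common neighbours inside that layer, while two vertices in no common
  layer have at most two common neighbours, the remaining corners of their rectangle. For
  \<open>d \<ge> 3\<close> a triangle, and for two parts of sizes at least 2 and 3 the three common neighbours
  of two vertices of the smaller part, force two image vertices into one layer; every further
  image vertex is then a common neighbour of two distinct vertices of that layer, so the copy
  of the complete multipartite graph lies in a copy of a factor. The exceptions are \<open>K\<^sub>2\<^sub>,\<^sub>2\<close>,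
  which is the product of two edges (and is trapped in a layer when a factor is edgeless), and
  the stars \<open>K\<^sub>1\<^sub>,\<^sub>s\<close>, which embed iff \<open>s\<close> is at most the maximum degree \<open>\<Delta>\<^sub>1 + \<Delta>\<^sub>2\<close> of the
  product.\<close>

definition embeds ::
  "('a \<Rightarrow> 'b) \<Rightarrow> 'a set \<Rightarrow> ('a \<Rightarrow> 'a \<Rightarrow> bool) \<Rightarrow> 'b set \<Rightarrow> ('b \<Rightarrow> 'b \<Rightarrow> bool) \<Rightarrow> bool" where
  "embeds f VH EH VG EG \<longleftrightarrow> inj_on f VH \<and> f ` VH \<subseteq> VG \<and>
     (\<forall>x\<in>VH. \<forall>y\<in>VH. EH x y \<longrightarrow> EG (f x) (f y))"

lemma subgraph_iso_iff_embeds: "subgraph_iso VH EH VG EG \<longleftrightarrow> (\<exists>f. embeds f VH EH VG EG)"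
  by (simp add: subgraph_iso_def embeds_def)

lemma embeds_comp:
  assumes "embeds f VH EH VG EG" "embeds g VG EG VK EK"
  shows "embeds (g \<circ> f) VH EH VK EK"
  using assms unfolding embeds_def by (auto simp: image_subset_iff intro: comp_inj_on inj_on_subset)

lemma embeds_swap: "embeds prod.swap (cart_V V1 V2) (cart_E V1 E1 V2 E2) (cart_V V2 V1) (cart_E V2 E2 V1 E1)"
  by (auto simp: embeds_def cart_V_def cart_E_def)

lemma embeds_layer: "v \<in> V2 \<Longrightarrow> embeds (\<lambda>x. (x, v)) V1 E1 (cart_V V1 V2) (cart_E V1 E1 V2 E2)"
  by (auto simp: embeds_def cart_V_def cart_E_def inj_on_def)

lemma subgraph_iso_cart_if_factor:
  assumes "V1 \<noteq> {}" "V2 \<noteq> {}"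
    and "subgraph_iso VH EH V1 E1 \<or> subgraph_iso VH EH V2 E2"
  shows "subgraph_iso VH EH (cart_V V1 V2) (cart_E V1 E1 V2 E2)"
proof -
  obtain u v where "u \<in> V1" "v \<in> V2" using assms(1,2) by blast
  from assms(3) show ?thesis
  proof
    assume "subgraph_iso VH EH V1 E1"
    then obtain g where "embeds g VH EH V1 E1" by (auto simp: subgraph_iso_iff_embeds)
    from embeds_comp[OF this embeds_layer[OF \<open>v \<in> V2\<close>]] show ?thesis
      by (auto simp: subgraph_iso_iff_embeds)
  next
    assume "subgraph_iso VH EH V2 E2"
    then obtain g where "embeds g VH EH V2 E2" by (auto simp: subgraph_iso_iff_embeds)
    from embeds_comp[OF embeds_comp[OF this embeds_layer[OF \<open>u \<in> V1\<close>]] embeds_swap]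
    show ?thesis by (auto simp: subgraph_iso_iff_embeds)
  qed
qed

definition layer :: "('a \<times> 'b) set \<Rightarrow> bool" where
  "layer L \<longleftrightarrow> (\<exists>u. L = {p. fst p = u}) \<or> (\<exists>v. L = {p. snd p = v})"

lemma layer_fst: "layer {p. fst p = u}"
  unfolding layer_def by (intro disjI1 exI) (rule refl)

lemma layer_snd: "layer {p. snd p = v}"
  unfolding layer_def by (intro disjI2 exI) (rule refl)

lemma cart_E_aligned: "cart_E V1 E1 V2 E2 P Q \<Longrightarrow> fst P = fst Q \<or> snd P = snd Q"
  by (auto simp: cart_E_def)

lemma cart_E_in_common_layer:
  assumes "cart_E V1 E1 V2 E2 P Q"
  shows "\<exists>L. layer L \<and> P \<in> L \<and> Q \<in> L"
  using cart_E_aligned[OF assms]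
proof
  assume "fst P = fst Q"
  then show ?thesis using layer_fst[of "fst P"] by auto
next
  assume "snd P = snd Q"
  then show ?thesis using layer_snd[of "snd P"] by auto
qed

lemma common_neighbour_in_layer:
  assumes "layer L" "P \<in> L" "Q \<in> L" "P \<noteq> Q"
    and "cart_E V1 E1 V2 E2 R P" "cart_E V1 E1 V2 E2 R Q"
  shows "R \<in> L"
proof -
  have "fst R = fst P \<or> snd R = snd P" "fst R = fst Q \<or> snd R = snd Q"
    using cart_E_aligned assms(5,6) by blast+
  with assms(1-4) show ?thesis
    unfolding layer_def by (auto simp: prod_eq_iff)
qed

lemma common_layer_if_three_common_neighbours:
  assumes "distinct [R1, R2, R3]"
    and "\<forall>R\<in>{R1, R2, R3}. cart_E V1 E1 V2 E2 R P \<and> cart_E V1 E1 V2 E2 R Q"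
  shows "\<exists>L. layer L \<and> P \<in> L \<and> Q \<in> L"
proof (rule ccontr)
  assume no_layer: "\<nexists>L. layer L \<and> P \<in> L \<and> Q \<in> L"
  have "fst P \<noteq> fst Q" using no_layer layer_fst[of "fst P"] by auto
  moreover have "snd P \<noteq> snd Q" using no_layer layer_snd[of "snd P"] by auto
  ultimately have "R = (fst P, snd Q) \<or> R = (fst Q, snd P)" if "R \<in> {R1, R2, R3}" for R
    using cart_E_aligned assms(2) that by (metis prod.collapse)
  from this[of R1] this[of R2] this[of R3] assms(1) show False by auto
qed

lemma embeds_fst_if_snd_const:
  assumes "graph V2 E2" and f: "embeds f VH EH (cart_V V1 V2) (cart_E V1 E1 V2 E2)"
    and v: "\<forall>x\<in>VH. snd (f x) = v"
  shows "embeds (fst \<circ> f) VH EH V1 E1"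
  unfolding embeds_def
proof (intro conjI)
  show "inj_on (fst \<circ> f) VH"
  proof (rule inj_onI)
    fix x y assume xy: "x \<in> VH" "y \<in> VH" "(fst \<circ> f) x = (fst \<circ> f) y"
    with v have "f x = f y" by (simp add: prod_eq_iff)
    with f xy(1,2) show "x = y" by (simp add: embeds_def inj_on_def)
  qed
  show "(fst \<circ> f) ` VH \<subseteq> V1"
    using f by (auto simp: embeds_def cart_V_def)
  show "\<forall>x\<in>VH. \<forall>y\<in>VH. EH x y \<longrightarrow> E1 ((fst \<circ> f) x) ((fst \<circ> f) y)"
  proof (intro ballI impI)
    fix x y assume xy: "x \<in> VH" "y \<in> VH" "EH x y"
    with f have "cart_E V1 E1 V2 E2 (f x) (f y)" by (simp add: embeds_def)
    moreover have "\<not> E2 (snd (f x)) (snd (f y))"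
      using assms(1) v xy(1,2) by (simp add: graph_def)
    ultimately show "E1 ((fst \<circ> f) x) ((fst \<circ> f) y)" by (simp add: cart_E_def)
  qed
qed

lemma subgraph_iso_factor_if_image_in_layer:
  assumes "graph V1 E1" "graph V2 E2"
    and f: "embeds f VH EH (cart_V V1 V2) (cart_E V1 E1 V2 E2)"
    and "layer L" "f ` VH \<subseteq> L"
  shows "subgraph_iso VH EH V1 E1 \<or> subgraph_iso VH EH V2 E2"
  using \<open>layer L\<close> unfolding layer_def
proof (elim disjE exE)
  fix u assume "L = {p. fst p = u}"
  then have "\<forall>x\<in>VH. snd ((prod.swap \<circ> f) x) = u" using assms(5) by auto
  with assms(1) embeds_comp[OF f embeds_swap] have "embeds (fst \<circ> (prod.swap \<circ> f)) VH EH V2 E2"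
    by (rule embeds_fst_if_snd_const)
  then show ?thesis by (auto simp: subgraph_iso_iff_embeds)
next
  fix v assume "L = {p. snd p = v}"
  then have "\<forall>x\<in>VH. snd (f x) = v" using assms(5) by auto
  with assms(2) f have "embeds (fst \<circ> f) VH EH V1 E1"
    by (rule embeds_fst_if_snd_const)
  then show ?thesis by (auto simp: subgraph_iso_iff_embeds)
qed

lemma embeds_Kmp_adjacent:
  assumes "embeds f (Kmp_V d n) (Kmp_E d n) VG EG"
    and "i < d" "j < n i" "i' < d" "j' < n i'" "i \<noteq> i'"
  shows "EG (f (i, j)) (f (i', j'))"
  using assms by (auto simp: embeds_def Kmp_V_def Kmp_E_def)

lemma embeds_Kmp_neq:
  assumes "embeds f (Kmp_V d n) (Kmp_E d n) VG EG"
    and "i < d" "j < n i" "i' < d" "j' < n i'" "(i, j) \<noteq> (i', j')"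
  shows "f (i, j) \<noteq> f (i', j')"
  using assms unfolding embeds_def inj_on_def Kmp_V_def by blast

lemma Kmp_image_in_layer_if_three_parts:
  assumes f: "embeds f (Kmp_V d n) (Kmp_E d n) (cart_V V1 V2) (cart_E V1 E1 V2 E2)"
    and "3 \<le> d" "\<forall>i<d. 1 \<le> n i"
  shows "\<exists>L. layer L \<and> f ` Kmp_V d n \<subseteq> L"
proof -
  have first_three: "a < d" "0 < n a" if "a < 3" for a
    using assms(2,3) that by (auto simp: Suc_le_eq)
  have adjacent: "cart_E V1 E1 V2 E2 (f (i, j)) (f (a, 0))"
    if "i < d" "j < n i" "a < 3" "a \<noteq> i" for i j a
    using embeds_Kmp_adjacent[OF f] first_three that by blast
  have apart: "f (a, 0) \<noteq> f (b, 0)" if "a < 3" "b < 3" "a \<noteq> b" for a b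
    using embeds_Kmp_neq[OF f] first_three that by blast
  have "cart_E V1 E1 V2 E2 (f (0, 0)) (f (1, 0))"
    using adjacent[of 0 0 1] first_three[of 0] by simp
  then obtain L where L: "layer L" "f (0, 0) \<in> L" "f (1, 0) \<in> L"
    using cart_E_in_common_layer by blast
  have "f (2, 0) \<in> L"
    using common_neighbour_in_layer[OF L apart[of 0 1] adjacent[of 2 0 0] adjacent[of 2 0 1]]
      first_three[of 2] by simp
  with L have corner: "f (a, 0) \<in> L" if "a < 3" for a
    using that by (auto simp: less_Suc_eq numeral_eq_Suc)
  have "f (i, j) \<in> L" if "i < d" "j < n i" for i j
  proof -
    have "\<exists>a b :: nat. a < 3 \<and> b < 3 \<and> a \<noteq> b \<and> a \<noteq> i \<and> b \<noteq> i" by presburger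
    then obtain a b :: nat where ab: "a < 3" "b < 3" "a \<noteq> b" "a \<noteq> i" "b \<noteq> i" by blast
    show ?thesis
      using common_neighbour_in_layer[OF L(1) corner[OF ab(1)] corner[OF ab(2)] apart[OF ab(1-3)]
          adjacent[OF that ab(1,4)] adjacent[OF that ab(2,5)]] .
  qed
  with L(1) show ?thesis by (auto simp: Kmp_V_def)
qed

lemma Kmp_image_in_layer_if_bipartite:
  assumes f: "embeds f (Kmp_V d n) (Kmp_E d n) (cart_V V1 V2) (cart_E V1 E1 V2 E2)"
    and "d = 2" "i < 2" "k < 2" "i \<noteq> k" "2 \<le> n i" "3 \<le> n k"
  shows "\<exists>L. layer L \<and> f ` Kmp_V d n \<subseteq> L"
proof -
  have adjacent: "cart_E V1 E1 V2 E2 (f (k, j)) (f (i, j'))" "cart_E V1 E1 V2 E2 (f (i, j')) (f (k, j))"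
    if "j < n k" "j' < n i" for j j'
    using embeds_Kmp_adjacent[OF f] assms(2-5) that by auto
  have apart: "f (a, j) \<noteq> f (a, j')" if "a < 2" "j < n a" "j' < n a" "j \<noteq> j'" for a j j'
    using embeds_Kmp_neq[OF f] assms(2) that by auto
  have "\<exists>L. layer L \<and> f (i, 0) \<in> L \<and> f (i, 1) \<in> L"
  proof (rule common_layer_if_three_common_neighbours)
    show "distinct [f (k, 0), f (k, 1), f (k, 2)]"
      using apart[OF assms(4)] assms(7) by auto
    show "\<forall>R\<in>{f (k, 0), f (k, 1), f (k, 2)}.
        cart_E V1 E1 V2 E2 R (f (i, 0)) \<and> cart_E V1 E1 V2 E2 R (f (i, 1))"
      using adjacent assms(6,7) by auto
  qed
  then obtain L where L: "layer L" "f (i, 0) \<in> L" "f (i, 1) \<in> L" by blast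
  have "f (i, 0) \<noteq> f (i, 1)" using apart[OF assms(3), of 0 1] assms(6) by simp
  then have part_k: "f (k, j) \<in> L" if "j < n k" for j
    by (rule common_neighbour_in_layer[OF L, of V1 E1 V2 E2])
      (use adjacent(1)[OF that] assms(6) in auto)
  have k01: "f (k, 0) \<in> L" "f (k, 1) \<in> L" "f (k, 0) \<noteq> f (k, 1)"
    using part_k apart[OF assms(4), of 0 1] assms(7) by auto
  have part_i: "f (i, j) \<in> L" if "j < n i" for j
    by (rule common_neighbour_in_layer[OF L(1) k01, of V1 E1 V2 E2])
      (use adjacent(2) that assms(7) in auto)
  have "f (a, j) \<in> L" if "a < 2" "j < n a" for a j
  proof -
    from that(1) assms(3-5) have "a = i \<or> a = k" by arith
    with that(2) part_i part_k show ?thesis by auto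
  qed
  with L(1) assms(2) show ?thesis by (auto simp: Kmp_V_def)
qed

lemma Kmp_image_in_layer_if_factor_edgeless:
  assumes f: "embeds f (Kmp_V d n) (Kmp_E d n) (cart_V V1 V2) (cart_E V1 E1 V2 E2)"
    and "\<not> has_edge V2 E2" "2 \<le> d" "1 \<le> n 0" "1 \<le> n 1"
  shows "\<exists>L. layer L \<and> f ` Kmp_V d n \<subseteq> L"
proof -
  have same_snd: "snd p = snd q" if "cart_E V1 E1 V2 E2 p q" for p q
  proof (rule ccontr)
    assume "snd p \<noteq> snd q"
    with that have "E2 (snd p) (snd q)" "snd p \<in> V2" "snd q \<in> V2"
      by (auto simp: cart_E_def)
    with assms(2) show False by (auto simp: has_edge_def)
  qed
  have first_two: "i' < d" "0 < n i'" if "i' < 2" for i'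
    using less_2_cases[OF that] assms(3-5) by (auto simp: Suc_le_eq)
  have joined: "snd (f (i, j)) = snd (f (i', 0))" if "i < d" "j < n i" "i' < 2" "i \<noteq> i'" for i j i'
    using same_snd[OF embeds_Kmp_adjacent[OF f that(1,2) first_two[OF that(3)] that(4)]] .
  define v where "v = snd (f (0, 0))"
  have "snd (f (i, j)) = v" if "i < d" "j < n i" for i j
  proof (cases "i = 0")
    case True
    have "snd (f (i, j)) = snd (f (1, 0))"
      by (rule joined) (use that True in auto)
    also have "\<dots> = v"
      unfolding v_def by (rule joined) (use assms(3,5) in auto)
    finally show ?thesis .
  next
    case False
    show ?thesis
      unfolding v_def by (rule joined) (use that False in auto)
  qed
  then have "f ` Kmp_V d n \<subseteq> {p. snd p = v}" by (auto simp: Kmp_V_def)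
  with layer_snd[of v] show ?thesis by blast
qed

lemma Kmp_subgraph_iso_factor_if_factor_edgeless:
  assumes G: "graph V1 E1" "graph V2 E2"
    and f: "embeds f (Kmp_V d n) (Kmp_E d n) (cart_V V1 V2) (cart_E V1 E1 V2 E2)"
    and "2 \<le> d" "1 \<le> n 0" "1 \<le> n 1" "\<not> (has_edge V1 E1 \<and> has_edge V2 E2)"
  shows "subgraph_iso (Kmp_V d n) (Kmp_E d n) V1 E1 \<or> subgraph_iso (Kmp_V d n) (Kmp_E d n) V2 E2"
proof (cases "has_edge V2 E2")
  case False
  with f assms(4-6) show ?thesis
    using Kmp_image_in_layer_if_factor_edgeless subgraph_iso_factor_if_image_in_layer[OF G f] by blast
next
  case True
  note swapped = embeds_comp[OF f embeds_swap]
  from True assms(7) have "\<exists>L. layer L \<and> (prod.swap \<circ> f) ` Kmp_V d n \<subseteq> L"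
    using Kmp_image_in_layer_if_factor_edgeless[OF swapped _ assms(4-6)] by blast
  then show ?thesis using subgraph_iso_factor_if_image_in_layer[OF G(2,1) swapped] by blast
qed

lemma graph_cart: "graph V1 E1 \<Longrightarrow> graph V2 E2 \<Longrightarrow> graph (cart_V V1 V2) (cart_E V1 E1 V2 E2)"
  by (auto simp: graph_def cart_V_def cart_E_def)

lemma degree_cart:
  assumes "graph V1 E1" "graph V2 E2" "u \<in> V1" "v \<in> V2"
  shows "degree (cart_V V1 V2) (cart_E V1 E1 V2 E2) (u, v) = degree V1 E1 u + degree V2 E2 v"
proof -
  have "{q \<in> cart_V V1 V2. cart_E V1 E1 V2 E2 (u, v) q}
      = {x \<in> V1. E1 u x} \<times> {v} \<union> {u} \<times> {y \<in> V2. E2 v y}"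
    using assms by (auto simp: cart_V_def cart_E_def)
  moreover have "{x \<in> V1. E1 u x} \<times> {v} \<inter> {u} \<times> {y \<in> V2. E2 v y} = {}"
    using assms(1) by (auto simp: graph_def)
  moreover have "finite V1" "finite V2" using assms(1,2) by (auto simp: graph_def)
  ultimately show ?thesis
    by (simp add: degree_def card_Un_disjoint card_cartesian_product)
qed

lemma degree_le_max_degree:
  assumes "graph V E" "v \<in> V"
  shows "degree V E v \<le> max_degree V E"
  unfolding max_degree_def by (rule Max_ge) (use assms in \<open>simp_all add: graph_def\<close>)

lemma max_degree_attained:
  assumes "graph V E" "V \<noteq> {}"
  obtains v where "v \<in> V" "degree V E v = max_degree V E"
proof -
  have "max_degree V E \<in> degree V E ` V"
    unfolding max_degree_def by (rule Max_in) (use assms in \<open>simp_all add: graph_def\<close>)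
  then obtain v where "v \<in> V" "max_degree V E = degree V E v" by blast
  with that show ?thesis by simp
qed

lemma max_degree_cart:
  assumes G: "graph V1 E1" "graph V2 E2" and "V1 \<noteq> {}" "V2 \<noteq> {}"
  shows "max_degree (cart_V V1 V2) (cart_E V1 E1 V2 E2) = max_degree V1 E1 + max_degree V2 E2"
  unfolding max_degree_def[of "cart_V V1 V2"]
proof (rule Max_eqI)
  show "finite (degree (cart_V V1 V2) (cart_E V1 E1 V2 E2) ` cart_V V1 V2)"
    using graph_cart[OF G] by (simp add: graph_def)
  show "p \<le> max_degree V1 E1 + max_degree V2 E2"
    if "p \<in> degree (cart_V V1 V2) (cart_E V1 E1 V2 E2) ` cart_V V1 V2" for p
  proof -
    from that obtain u v where "u \<in> V1" "v \<in> V2"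
      "p = degree (cart_V V1 V2) (cart_E V1 E1 V2 E2) (u, v)"
      by (auto simp: cart_V_def)
    with G show ?thesis by (simp add: degree_cart add_mono degree_le_max_degree)
  qed
  obtain u v where "u \<in> V1" "degree V1 E1 u = max_degree V1 E1"
    "v \<in> V2" "degree V2 E2 v = max_degree V2 E2"
    using max_degree_attained assms by metis
  with G have "max_degree V1 E1 + max_degree V2 E2 = degree (cart_V V1 V2) (cart_E V1 E1 V2 E2) (u, v)"
    by (simp add: degree_cart)
  with \<open>u \<in> V1\<close> \<open>v \<in> V2\<close>
  show "max_degree V1 E1 + max_degree V2 E2 \<in> degree (cart_V V1 V2) (cart_E V1 E1 V2 E2) ` cart_V V1 V2"
    by (simp add: cart_V_def)
qed

lemma Kmp_V_star:
  assumes "i < 2" "k < 2" "i \<noteq> k" "n i = 1"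
  shows "Kmp_V 2 n = insert (i, 0) ((\<lambda>j. (k, j)) ` {..<n k})"
  using assms by (auto simp: Kmp_V_def less_2_cases_iff)

lemma star_subgraph_iso_iff:
  assumes G: "graph V E" "V \<noteq> {}" and ik: "i < 2" "k < 2" "i \<noteq> k" "n i = 1"
  shows "subgraph_iso (Kmp_V 2 n) (Kmp_E 2 n) V E \<longleftrightarrow> n k \<le> max_degree V E"
proof
  assume "subgraph_iso (Kmp_V 2 n) (Kmp_E 2 n) V E"
  then obtain f where f: "embeds f (Kmp_V 2 n) (Kmp_E 2 n) V E"
    by (auto simp: subgraph_iso_iff_embeds)
  let ?leaves = "(\<lambda>j. (k, j)) ` {..<n k}"
  have centre: "f (i, 0) \<in> V" using f ik by (auto simp: embeds_def Kmp_V_def)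
  have "card (f ` ?leaves) = n k"
    using f Kmp_V_star[of i k n, OF ik] by (auto simp: embeds_def card_image inj_on_def)
  moreover have "f ` ?leaves \<subseteq> {u \<in> V. E (f (i, 0)) u}"
    using f embeds_Kmp_adjacent[OF f, of i 0 k] ik by (auto simp: embeds_def Kmp_V_def)
  moreover have "finite V" using G by (simp add: graph_def)
  ultimately have "n k \<le> degree V E (f (i, 0))"
    unfolding degree_def by (metis (no_types, lifting) card_mono finite_subset mem_Collect_eq subsetI)
  also have "\<dots> \<le> max_degree V E" by (rule degree_le_max_degree[OF G(1) centre])
  finally show "n k \<le> max_degree V E" .
next
  assume "n k \<le> max_degree V E"
  obtain c where c: "c \<in> V" "degree V E c = max_degree V E"
    using max_degree_attained[OF G] .
  let ?N = "{u \<in> V. E c u}"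
  have "finite V" using G by (simp add: graph_def)
  with \<open>n k \<le> max_degree V E\<close> c obtain h where h: "h ` {..<n k} \<subseteq> ?N" "inj_on h {..<n k}"
    using card_le_inj[of "{..<n k}" ?N] by (auto simp: degree_def)
  have "c \<notin> ?N" using G by (auto simp: graph_def)
  define f where "f = (\<lambda>(a, j). if a = i then c else h j)"
  have "embeds f (Kmp_V 2 n) (Kmp_E 2 n) V E"
    unfolding embeds_def Kmp_V_star[of i k n, OF ik]
  proof (intro conjI)
    show "inj_on f (insert (i, 0) ((\<lambda>j. (k, j)) ` {..<n k}))"
      using h \<open>c \<notin> ?N\<close> ik by (auto simp: f_def inj_on_def)
    show "f ` insert (i, 0) ((\<lambda>j. (k, j)) ` {..<n k}) \<subseteq> V"
      using h c ik by (auto simp: f_def)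
    show "\<forall>x\<in>insert (i, 0) ((\<lambda>j. (k, j)) ` {..<n k}). \<forall>y\<in>insert (i, 0) ((\<lambda>j. (k, j)) ` {..<n k}).
        Kmp_E 2 n x y \<longrightarrow> E (f x) (f y)"
      using h G ik by (auto simp: f_def Kmp_E_def graph_def)
  qed
  then show "subgraph_iso (Kmp_V 2 n) (Kmp_E 2 n) V E" by (auto simp: subgraph_iso_iff_embeds)
qed

lemma star_subgraph_iso_cart_iff:
  assumes "graph V1 E1" "graph V2 E2" "V1 \<noteq> {}" "V2 \<noteq> {}"
    and "i < 2" "k < 2" "i \<noteq> k" "n i = 1"
  shows "subgraph_iso (Kmp_V 2 n) (Kmp_E 2 n) (cart_V V1 V2) (cart_E V1 E1 V2 E2)
    \<longleftrightarrow> n k \<le> max_degree V1 E1 + max_degree V2 E2"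
proof -
  have "cart_V V1 V2 \<noteq> {}" using assms(3,4) by (simp add: cart_V_def)
  from star_subgraph_iso_iff[OF graph_cart[OF assms(1,2)] this, of i k n] assms(5-8)
  show ?thesis by (simp add: max_degree_cart[OF assms(1-4)])
qed

lemma square_subgraph_iso_cart:
  assumes "graph V1 E1" "graph V2 E2" "has_edge V1 E1" "has_edge V2 E2" "n 0 = 2" "n 1 = 2"
  shows "subgraph_iso (Kmp_V 2 n) (Kmp_E 2 n) (cart_V V1 V2) (cart_E V1 E1 V2 E2)"
proof -
  obtain u1 u2 where u: "u1 \<in> V1" "u2 \<in> V1" "E1 u1 u2"
    using assms(3) by (auto simp: has_edge_def)
  obtain v1 v2 where v: "v1 \<in> V2" "v2 \<in> V2" "E2 v1 v2"
    using assms(4) by (auto simp: has_edge_def)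
  have sym: "E1 u2 u1" "E2 v2 v1" "u1 \<noteq> u2" "v1 \<noteq> v2"
    using assms(1,2) u(3) v(3) by (auto simp: graph_def)
  have K: "Kmp_V 2 n = {(0, 0), (0, 1), (1, 0), (1, 1)}"
    using assms(5,6) by (auto simp: Kmp_V_def less_2_cases_iff)
  define f where "f = (\<lambda>(i :: nat, j :: nat).
    if i = 0 then (if j = 0 then (u1, v1) else (u2, v2)) else (if j = 0 then (u1, v2) else (u2, v1)))"
  have "embeds f (Kmp_V 2 n) (Kmp_E 2 n) (cart_V V1 V2) (cart_E V1 E1 V2 E2)"
    unfolding embeds_def K using u v sym
    by (auto simp: f_def inj_on_def cart_V_def cart_E_def Kmp_E_def)
  then show ?thesis by (auto simp: subgraph_iso_iff_embeds)
qed

lemma Kmp_image_in_layer: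
  assumes f: "embeds f (Kmp_V d n) (Kmp_E d n) (cart_V V1 V2) (cart_E V1 E1 V2 E2)"
    and "2 \<le> d" "\<forall>i<d. 1 \<le> n i"
    and not_small: "\<not> (d = 2 \<and> (n 0 = 1 \<or> n 1 = 1 \<or> n 0 = 2 \<and> n 1 = 2))"
  shows "\<exists>L. layer L \<and> f ` Kmp_V d n \<subseteq> L"
proof (cases "3 \<le> d")
  case True
  then show ?thesis using Kmp_image_in_layer_if_three_parts[OF f _ assms(3)] by blast
next
  case False
  with assms(2) have "d = 2" by simp
  moreover have "1 \<le> n 0" "1 \<le> n 1" using assms(2,3) by auto
  ultimately consider "2 \<le> n 0" "3 \<le> n 1" | "3 \<le> n 0" "2 \<le> n 1"
    using not_small by linarith
  then show ?thesis
  proof cases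
    case 1
    then show ?thesis using Kmp_image_in_layer_if_bipartite[OF f \<open>d = 2\<close>, of 0 1] by simp
  next
    case 2
    then show ?thesis using Kmp_image_in_layer_if_bipartite[OF f \<open>d = 2\<close>, of 1 0] by simp
  qed
qed

theorem mainTheorem1:
  fixes d :: nat and n :: "nat \<Rightarrow> nat"
    and V1 :: "'a set" and E1 :: "'a \<Rightarrow> 'a \<Rightarrow> bool"
    and V2 :: "'b set" and E2 :: "'b \<Rightarrow> 'b \<Rightarrow> bool"
  assumes "d \<ge> 2" and "\<forall>i<d. n i \<ge> 1"
    and "graph V1 E1" and "graph V2 E2" and "V1 \<noteq> {}" and "V2 \<noteq> {}"
  shows "subgraph_iso (Kmp_V d n) (Kmp_E d n) (cart_V V1 V2) (cart_E V1 E1 V2 E2)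
    \<longleftrightarrow>
      (subgraph_iso (Kmp_V d n) (Kmp_E d n) V1 E1 \<or> subgraph_iso (Kmp_V d n) (Kmp_E d n) V2 E2)
    \<or> (d = 2 \<and> n 0 = 2 \<and> n 1 = 2 \<and> has_edge V1 E1 \<and> has_edge V2 E2)
    \<or> (d = 2 \<and> (\<exists>s::nat. s \<ge> 1 \<and> {n 0, n 1} = {1, s}
          \<and> max_degree V1 E1 + max_degree V2 E2 \<ge> s))"
proof (rule iffI, goal_cases)
  case 1
  then obtain f where f: "embeds f (Kmp_V d n) (Kmp_E d n) (cart_V V1 V2) (cart_E V1 E1 V2 E2)"
    by (auto simp: subgraph_iso_iff_embeds)
  have n01: "1 \<le> n 0" "1 \<le> n 1" using assms(1,2) by auto
  consider (star) i k where "d = 2" "i < 2" "k < 2" "i \<noteq> k" "n i = 1"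
    | (square) "d = 2" "n 0 = 2" "n 1 = 2"
    | (large) "\<not> (d = 2 \<and> (n 0 = 1 \<or> n 1 = 1 \<or> n 0 = 2 \<and> n 1 = 2))"
    by (metis zero_less_numeral one_less_numeral_iff semiring_norm(76) zero_neq_one)
  then show ?case
  proof cases
    case star
    with 1 have "n k \<le> max_degree V1 E1 + max_degree V2 E2"
      using star_subgraph_iso_cart_iff[OF assms(3-6) star(2-4), of n] by simp
    with star n01 show ?thesis by (auto simp: less_2_cases_iff insert_commute)
  next
    case square
    then show ?thesis
      using Kmp_subgraph_iso_factor_if_factor_edgeless[OF assms(3,4) f assms(1) n01] by blast
  next
    case large
    then show ?thesis
      using subgraph_iso_factor_if_image_in_layer[OF assms(3,4) f] Kmp_image_in_layer[OF f assms(1,2)]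
      by blast
  qed
next
  case 2
  then show ?case
  proof (elim disjE conjE exE)
    fix s assume s: "d = 2" "{n 0, n 1} = {1, s}" "s \<le> max_degree V1 E1 + max_degree V2 E2"
    then have "n 0 = 1 \<and> n 1 = s \<or> n 1 = 1 \<and> n 0 = s" by (auto simp: doubleton_eq_iff)
    with s show ?case using star_subgraph_iso_cart_iff[OF assms(3-6), of 0 1 n]
        star_subgraph_iso_cart_iff[OF assms(3-6), of 1 0 n] by auto
  qed (use subgraph_iso_cart_if_factor[OF assms(5,6)] square_subgraph_iso_cart[OF assms(3,4)] in auto)
qed
end
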